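(* Let $1\le l_1\le l_2\le\cdots\le l_n$ be integers and $A=\{a_1^{2^{l_1}-1},\ldots,a_n^{2^{l_n}-1}\}$. Then for every integer $m\ge0$, $$|C_m(A)|=\sum\prod_{i=1}^{l_n}\binom{\overline{k_{2^{i-1}}}}{\lambda_i},$$ the sum over all tuples $(\lambda_1,\ldots,\lambda_{l_n})$ of non-negative integers with $\lambda_1+2\lambda_2+2^2\lambda_3+\cdots+2^{l_n-1}\lambda_{l_n}=m$ and $\lambda_i\le\overline{k_{2^{i-1}}}$ for $i=1,\ldots,l_n$.
   Context: A multiset $A=\{a_1^{k_1},\ldots,a_n^{k_n}\}$ consists of distinct elements $a_1,\ldots,a_n$ with positive integer multiplicities $k_1,\ldots,k_n$ (here $k_i=2^{l_i}-1$). A submultiset of $A$ is a multiset $\{a_1^{r_1},\ldots,a_n^{r_n}\}$ with integers $0\le r_i\le k_i$, of cardinality $r_1+\cdots+r_n$. $C_m(A)$ denotes the set of all submultisets of $A$ of cardinality $m$. For each integer $j\ge1$, $\overline{k_j}=|\{i\in\{1,\ldots,n\}: k_i\ge j\}|$. *)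

theory Defs
  imports "HOL-Library.Multiset"
begin

definition multiset_of :: "nat \<Rightarrow> (nat \<Rightarrow> 'a) \<Rightarrow> (nat \<Rightarrow> nat) \<Rightarrow> 'a multiset" where
  "multiset_of n a k = (\<Sum>i\<in>{1..n}. replicate_mset (k i) (a i))"

definition C :: "nat \<Rightarrow> 'a multiset \<Rightarrow> 'a multiset set" where
  "C m A = {B. B \<subseteq># A \<and> size B = m}"

definition kbar :: "nat \<Rightarrow> (nat \<Rightarrow> nat) \<Rightarrow> nat \<Rightarrow> nat" where
  "kbar n k j = card {i\<in>{1..n}. k i \<ge> j}"

end

theory Submission imports Defs "HOL-Library.FuncSet" begin

text \<open>A submultiset of size m is a vector of multiplicities r i < 2 ^ l i with sum m.
  Writing each r i in binary turns it into a family of sets S_1, ..., S_L, where S_j holds the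
  indices i whose digit of weight 2 ^ (j - 1) is 1; such an i has j \<le> l i, so S_j is an
  arbitrary subset of a set of size kbar (2 ^ (j - 1)), and the condition sum r = m becomes
  sum 2 ^ (j - 1) * card S_j = m. Counting the families with prescribed sizes
  card S_j = \<lambda>_j gives the product of binomial coefficients.\<close>

lemma count_multiset_of:
  "inj_on a {1..n} \<Longrightarrow> i \<in> {1..n} \<Longrightarrow> count (multiset_of n a k) (a i) = k i"
  unfolding multiset_of_def by (simp add: count_sum inj_on_eq_iff cong: if_cong)

lemma count_multiset_of_notin:
  "x \<notin> a ` {1..n} \<Longrightarrow> count (multiset_of n a k) x = 0"
  unfolding multiset_of_def by (auto simp: count_sum)

lemma size_multiset_of: "size (multiset_of n a k) = sum k {1..n}"
  unfolding multiset_of_def by (induction n) auto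

lemma multiset_of_subseteq_iff:
  assumes "inj_on a {1..n}"
  shows "multiset_of n a r \<subseteq># multiset_of n a k \<longleftrightarrow> (\<forall>i\<in>{1..n}. r i \<le> k i)"
proof
  show "\<forall>i\<in>{1..n}. r i \<le> k i" if "multiset_of n a r \<subseteq># multiset_of n a k"
    using mset_subset_eq_count[OF that] by (metis count_multiset_of[OF assms])
  show "multiset_of n a r \<subseteq># multiset_of n a k" if "\<forall>i\<in>{1..n}. r i \<le> k i"
  proof (rule mset_subset_eqI)
    fix x
    show "count (multiset_of n a r) x \<le> count (multiset_of n a k) x"
      using that by (cases "x \<in> a ` {1..n}")
        (auto simp: count_multiset_of[OF assms] count_multiset_of_notin)
  qed
qed

lemma subseteq_multiset_of_eq:
  assumes "inj_on a {1..n}" and "B \<subseteq># multiset_of n a k"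
  shows "B = multiset_of n a (\<lambda>i. count B (a i))"
proof (rule multiset_eqI)
  fix x
  show "count B x = count (multiset_of n a (\<lambda>i. count B (a i))) x"
  proof (cases "x \<in> a ` {1..n}")
    case True
    then show ?thesis using assms(1) by (auto simp: count_multiset_of)
  next
    case False
    then show ?thesis using mset_subset_eq_count[OF assms(2), of x]
      by (simp add: count_multiset_of_notin)
  qed
qed

lemma card_C_multiset_of:
  assumes inj: "inj_on a {1..n}"
  shows "card (C m (multiset_of n a k)) =
    card {r. (\<forall>i. i \<notin> {1..n} \<longrightarrow> r i = 0) \<and> (\<forall>i\<in>{1..n}. r i \<le> k i) \<and> sum r {1..n} = m}"
    (is "_ = card ?R")
proof -
  have "inj_on (multiset_of n a) ?R"
  proof (rule inj_onI)
    fix r r' assume r: "r \<in> ?R" and r': "r' \<in> ?R" and eq: "multiset_of n a r = multiset_of n a r'"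
    show "r = r'"
    proof
      fix i
      show "r i = r' i"
      proof (cases "i \<in> {1..n}")
        case True
        then show ?thesis using eq count_multiset_of[OF inj True] by metis
      qed (use r r' in auto)
    qed
  qed
  moreover have "multiset_of n a ` ?R = C m (multiset_of n a k)"
  proof
    show "multiset_of n a ` ?R \<subseteq> C m (multiset_of n a k)"
      using inj by (auto simp: C_def multiset_of_subseteq_iff size_multiset_of)
    show "C m (multiset_of n a k) \<subseteq> multiset_of n a ` ?R"
    proof
      fix B assume B: "B \<in> C m (multiset_of n a k)"
      define r where "r i = (if i \<in> {1..n} then count B (a i) else 0)" for i
      have B_eq: "B = multiset_of n a r"
        using subseteq_multiset_of_eq[OF inj, of B k] B
        by (simp add: C_def multiset_of_def r_def)
      have "multiset_of n a r \<subseteq># multiset_of n a k" "size (multiset_of n a r) = m"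
        using B by (simp_all add: C_def B_eq[symmetric])
      then have "r \<in> ?R"
        by (auto simp: r_def multiset_of_subseteq_iff[OF inj] size_multiset_of)
      with B_eq show "B \<in> multiset_of n a ` ?R" by blast
    qed
  qed
  ultimately show ?thesis using card_image by fastforce
qed

text \<open>Slices are indexed from 1: S j is the slice of the digit of weight 2 ^ (j - 1).\<close>

definition digit_value :: "nat \<Rightarrow> (nat \<Rightarrow> 'i set) \<Rightarrow> 'i \<Rightarrow> nat" where
  "digit_value L S i = (\<Sum>k<L. of_bool (i \<in> S (Suc k)) * 2 ^ k)"

definition bit_slices :: "nat \<Rightarrow> ('i \<Rightarrow> nat) \<Rightarrow> nat \<Rightarrow> 'i set" where
  "bit_slices L r = restrict (\<lambda>j. {i. bit (r i) (j - 1)}) {1..L}"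

lemma bit_digit_value: "bit (digit_value L S i) k \<longleftrightarrow> k < L \<and> i \<in> S (Suc k)"
proof -
  have "digit_value L S i = horner_sum of_bool 2 (map (\<lambda>k. i \<in> S (Suc k)) [0..<L])"
    by (simp add: digit_value_def horner_sum_eq_sum lessThan_atLeast0)
  then show ?thesis
    by (auto simp only: bit_horner_sum_bit_iff possible_bit_def) (auto simp: nth_map_upt)
qed

lemma digit_value_less_exp:
  assumes "\<And>k. k < L \<Longrightarrow> i \<in> S (Suc k) \<Longrightarrow> k < K"
  shows "digit_value L S i < 2 ^ K"
proof -
  have "take_bit K (digit_value L S i) = digit_value L S i"
    by (rule bit_eqI) (auto simp: bit_take_bit_iff bit_digit_value assms)
  then show ?thesis by (metis take_bit_nat_less_exp)
qed

lemma digit_value_bit_slices: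
  assumes "r i < 2 ^ L"
  shows "digit_value L (bit_slices L r) i = r i"
proof -
  have "digit_value L (bit_slices L r) i = (\<Sum>k<L. of_bool (bit (r i) k) * 2 ^ k)"
    by (simp add: digit_value_def bit_slices_def)
  also have "\<dots> = r i"
    using take_bit_sum[of L "r i"] take_bit_nat_eq_self[OF assms]
    by (simp add: push_bit_eq_mult lessThan_atLeast0 mult.commute)
  finally show ?thesis .
qed

lemma bit_slices_digit_value:
  assumes "S \<in> extensional {1..L}"
  shows "bit_slices L (digit_value L S) = S"
proof
  fix j
  show "bit_slices L (digit_value L S) j = S j"
  proof (cases "j \<in> {1..L}")
    case True
    then have "Suc (j - 1) = j" "j - 1 < L" by auto
    with True show ?thesis by (simp add: bit_slices_def bit_digit_value)
  qed (use assms in \<open>auto simp: bit_slices_def extensional_def\<close>)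
qed

lemma sum_digit_value:
  assumes "finite I" and "\<And>j. j \<in> {1..L} \<Longrightarrow> S j \<subseteq> I"
  shows "(\<Sum>i\<in>I. digit_value L S i) = (\<Sum>j\<in>{1..L}. 2 ^ (j - 1) * card (S j))"
proof -
  have "(\<Sum>i\<in>I. digit_value L S i) = (\<Sum>k<L. \<Sum>i\<in>I. of_bool (i \<in> S (Suc k)) * 2 ^ k)"
    unfolding digit_value_def by (rule sum.swap)
  also have "\<dots> = (\<Sum>k<L. 2 ^ k * card (S (Suc k)))"
  proof (rule sum.cong[OF refl])
    fix k assume "k \<in> {..<L}"
    then have "I \<inter> {i. i \<in> S (Suc k)} = S (Suc k)" using assms(2)[of "Suc k"] by auto
    then show "(\<Sum>i\<in>I. of_bool (i \<in> S (Suc k)) * 2 ^ k) = 2 ^ k * card (S (Suc k))"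
      using assms(1) by (simp add: sum_distrib_right[symmetric] mult.commute)
  qed
  also have "\<dots> = (\<Sum>j\<in>{1..L}. 2 ^ (j - 1) * card (S j))"
    by (induction L) auto
  finally show ?thesis .
qed

lemma card_bounded_vectors_eq_card_slice_families:
  fixes l :: "'i \<Rightarrow> nat"
  assumes "finite I" and l_le: "\<And>i. i \<in> I \<Longrightarrow> l i \<le> L"
  defines "T \<equiv> \<lambda>j. {i\<in>I. j \<le> l i}"
  shows "card {r. (\<forall>i. i \<notin> I \<longrightarrow> r i = 0) \<and> (\<forall>i\<in>I. r i < 2 ^ l i) \<and> sum r I = m} =
    card {S \<in> PiE {1..L} (\<lambda>j. Pow (T j)). (\<Sum>j\<in>{1..L}. 2 ^ (j - 1) * card (S j)) = m}"
    (is "card ?R = card ?F")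
proof -
  have weight: "sum (digit_value L S) I = (\<Sum>j\<in>{1..L}. 2 ^ (j - 1) * card (S j))"
    if "S \<in> PiE {1..L} (\<lambda>j. Pow (T j))" for S
    using that by (intro sum_digit_value \<open>finite I\<close>) (auto simp: T_def)
  have "bij_betw (digit_value L) ?F ?R"
  proof (rule bij_betw_byWitness[where f' = "bit_slices L"])
    show "\<forall>S\<in>?F. bit_slices L (digit_value L S) = S"
      by (auto intro: bit_slices_digit_value simp: PiE_def)
    have r_less: "r i < 2 ^ L" if "r \<in> ?R" for r i
    proof (cases "i \<in> I")
      case True
      then have "r i < 2 ^ l i" using that by blast
      also have "\<dots> \<le> 2 ^ L" using l_le[OF True] by (simp add: power_increasing)
      finally show ?thesis .
    qed (use that in auto)
    then show inverse: "\<forall>r\<in>?R. digit_value L (bit_slices L r) = r"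
      by (auto intro: digit_value_bit_slices)
    show "digit_value L ` ?F \<subseteq> ?R"
    proof (rule image_subsetI)
      fix S assume "S \<in> ?F"
      then have S: "S \<in> PiE {1..L} (\<lambda>j. Pow (T j))"
        and m: "(\<Sum>j\<in>{1..L}. 2 ^ (j - 1) * card (S j)) = m"
        by auto
      have in_T: "i \<in> T (Suc k)" if "k < L" "i \<in> S (Suc k)" for i k
        using S that by auto
      have "digit_value L S i = 0" if "i \<notin> I" for i
        using in_T that by (auto simp: digit_value_def T_def intro!: sum.neutral)
      moreover have "digit_value L S i < 2 ^ l i" for i
        using in_T by (intro digit_value_less_exp) (fastforce simp: T_def)
      ultimately show "digit_value L S \<in> ?R" using weight[OF S] m by auto
    qed
    show "bit_slices L ` ?R \<subseteq> ?F"
    proof (rule image_subsetI)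
      fix r assume r: "r \<in> ?R"
      have "{i. bit (r i) (j - 1)} \<subseteq> T j" for j
      proof
        fix i assume "i \<in> {i. bit (r i) (j - 1)}"
        then have bit: "bit (r i) (j - 1)" by simp
        have "i \<in> I"
        proof (rule ccontr)
          assume "i \<notin> I"
          then have "r i = 0" using r by blast
          with bit show False by simp
        qed
        then have "take_bit (l i) (r i) = r i" using r by (simp add: take_bit_nat_eq_self)
        then have "j - 1 < l i" using bit by (metis bit_take_bit_iff)
        then show "i \<in> T j" using \<open>i \<in> I\<close> by (auto simp: T_def)
      qed
      then have S: "bit_slices L r \<in> PiE {1..L} (\<lambda>j. Pow (T j))"
        by (auto simp: bit_slices_def)
      have "(\<Sum>j\<in>{1..L}. 2 ^ (j - 1) * card (bit_slices L r j)) = sum r I"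
        using weight[OF S] inverse r by simp
      with S r show "bit_slices L r \<in> ?F" by simp
    qed
  qed
  then show ?thesis by (rule bij_betw_same_card[symmetric])
qed

lemma card_families_by_sizes:
  fixes T :: "nat \<Rightarrow> 'a set" and w :: "nat \<Rightarrow> nat" and L m :: nat
  assumes fin: "\<And>j. finite (T j)"
  defines "\<Lambda> \<equiv> {lam. (\<forall>i. i \<notin> {1..L} \<longrightarrow> lam i = 0) \<and> (\<forall>i\<in>{1..L}. lam i \<le> card (T i))
      \<and> (\<Sum>i\<in>{1..L}. w i * lam i) = m}"
  shows "card {S \<in> PiE {1..L} (\<lambda>j. Pow (T j)). (\<Sum>j\<in>{1..L}. w j * card (S j)) = m} =
    (\<Sum>lam\<in>\<Lambda>. \<Prod>i\<in>{1..L}. card (T i) choose lam i)"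
proof -
  define P where "P lam = PiE {1..L} (\<lambda>j. {X. X \<subseteq> T j \<and> card X = lam j})" for lam :: "nat \<Rightarrow> nat"
  have families_eq: "{S \<in> PiE {1..L} (\<lambda>j. Pow (T j)). (\<Sum>j\<in>{1..L}. w j * card (S j)) = m} =
    (\<Union>lam\<in>\<Lambda>. P lam)"
  proof (intro equalityI subsetI)
    fix S assume S: "S \<in> {S \<in> PiE {1..L} (\<lambda>j. Pow (T j)). (\<Sum>j\<in>{1..L}. w j * card (S j)) = m}"
    define lam where "lam i = (if i \<in> {1..L} then card (S i) else 0)" for i
    have "lam \<in> \<Lambda>"
      using S fin by (auto simp: \<Lambda>_def lam_def PiE_def Pi_def intro!: card_mono)
    moreover have "S \<in> P lam" using S by (auto simp: P_def lam_def)
    ultimately show "S \<in> (\<Union>lam\<in>\<Lambda>. P lam)" by blast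
  next
    fix S assume "S \<in> (\<Union>lam\<in>\<Lambda>. P lam)"
    then obtain lam where lam: "lam \<in> \<Lambda>" "S \<in> P lam" by blast
    then have "(\<Sum>j\<in>{1..L}. w j * card (S j)) = (\<Sum>j\<in>{1..L}. w j * lam j)"
      by (intro sum.cong) (auto simp: P_def)
    with lam show "S \<in> {S \<in> PiE {1..L} (\<lambda>j. Pow (T j)). (\<Sum>j\<in>{1..L}. w j * card (S j)) = m}"
      by (auto simp: P_def \<Lambda>_def PiE_def Pi_def)
  qed
  have "finite \<Lambda>"
  proof (rule finite_subset)
    let ?N = "\<Sum>j\<in>{1..L}. card (T j)"
    have "lam i \<le> ?N" if "lam \<in> \<Lambda>" "i \<in> {1..L}" for lam i
      using that member_le_sum[of i "{1..L}" "\<lambda>j. card (T j)"] unfolding \<Lambda>_def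
      by (fastforce intro: le_trans)
    then show "\<Lambda> \<subseteq> {lam. \<forall>i. (i \<in> {1..L} \<longrightarrow> lam i \<in> {0..?N}) \<and> (i \<notin> {1..L} \<longrightarrow> lam i = 0)}"
      by (auto simp: \<Lambda>_def)
  qed (intro finite_set_of_finite_funs; simp)
  moreover have "P lam \<inter> P lam' = {}"
    if lam: "lam \<in> \<Lambda>" "lam' \<in> \<Lambda>" and "lam \<noteq> lam'" for lam lam'
  proof -
    obtain i where "i \<in> {1..L}" "lam i \<noteq> lam' i"
    proof (rule ccontr)
      assume "\<not> thesis"
      with that lam have "lam i = lam' i" for i by (cases "i \<in> {1..L}") (auto simp: \<Lambda>_def)
      with \<open>lam \<noteq> lam'\<close> show False by blast
    qed
    then show ?thesis by (auto simp: P_def PiE_def Pi_def)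
  qed
  moreover have "card (P lam) = (\<Prod>i\<in>{1..L}. card (T i) choose lam i)" for lam
    unfolding P_def by (simp add: card_PiE n_subsets fin)
  moreover have "finite (P lam)" for lam
    unfolding P_def using fin by (auto intro!: finite_PiE)
  ultimately show ?thesis
    unfolding families_eq by (simp add: card_UN_disjoint)
qed

lemma le_mersenne_iff_less: "(x::nat) \<le> 2 ^ L - 1 \<longleftrightarrow> x < 2 ^ L"
  using less_eq_iff_succ_less[of x "2 ^ L - 1"] by simp

lemma kbar_mersenne:
  assumes "1 \<le> j"
  shows "kbar n (\<lambda>i. 2 ^ l i - 1) (2 ^ (j - 1)) = card {i\<in>{1..n}. j \<le> l i}"
proof -
  have "2 ^ (j - 1) \<le> (2::nat) ^ l i - 1 \<longleftrightarrow> j \<le> l i" for i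
  proof -
    have "2 ^ (j - 1) \<le> (2::nat) ^ l i - 1 \<longleftrightarrow> 2 ^ (j - 1) < (2::nat) ^ l i"
      by (rule le_mersenne_iff_less)
    also have "\<dots> \<longleftrightarrow> j \<le> l i"
      using assms by auto
    finally show ?thesis .
  qed
  then show ?thesis unfolding kbar_def by (simp only:)
qed

theorem theorem5p3:
  fixes n :: nat and l :: "nat \<Rightarrow> nat" and a :: "nat \<Rightarrow> 'a" and m :: nat
  assumes "n \<ge> 1"
    and "inj_on a {1..n}"
    and "l 1 \<ge> 1"
    and "\<And>i j. 1 \<le> i \<Longrightarrow> i \<le> j \<Longrightarrow> j \<le> n \<Longrightarrow> l i \<le> l j"
  shows "card (C m (multiset_of n a (\<lambda>i. 2 ^ l i - 1))) =
    (\<Sum>lam\<in>{lam :: nat \<Rightarrow> nat.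
           (\<forall>i. i \<notin> {1..l n} \<longrightarrow> lam i = 0)
         \<and> (\<forall>i\<in>{1..l n}. lam i \<le> kbar n (\<lambda>i. 2 ^ l i - 1) (2 ^ (i - 1)))
         \<and> (\<Sum>i\<in>{1..l n}. 2 ^ (i - 1) * lam i) = m}.
       \<Prod>i\<in>{1..l n}. kbar n (\<lambda>i. 2 ^ l i - 1) (2 ^ (i - 1)) choose lam i)"
proof -
  define T where "T j = {i\<in>{1..n}. j \<le> l i}" for j
  show ?thesis (is "?lhs = ?rhs")
  proof -
    have "?lhs = card {r. (\<forall>i. i \<notin> {1..n} \<longrightarrow> r i = 0) \<and> (\<forall>i\<in>{1..n}. r i < 2 ^ l i)
        \<and> sum r {1..n} = m}"
      by (simp only: card_C_multiset_of[OF assms(2)] le_mersenne_iff_less)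
    also have "\<dots> = card {S \<in> PiE {1..l n} (\<lambda>j. Pow (T j)).
        (\<Sum>j\<in>{1..l n}. 2 ^ (j - 1) * card (S j)) = m}"
      unfolding T_def using assms(4) by (intro card_bounded_vectors_eq_card_slice_families) auto
    also have "\<dots> = (\<Sum>lam\<in>{lam. (\<forall>i. i \<notin> {1..l n} \<longrightarrow> lam i = 0)
        \<and> (\<forall>i\<in>{1..l n}. lam i \<le> card (T i)) \<and> (\<Sum>i\<in>{1..l n}. 2 ^ (i - 1) * lam i) = m}.
        \<Prod>i\<in>{1..l n}. card (T i) choose lam i)"
      by (rule card_families_by_sizes) (simp add: T_def)
    also have "\<dots> = ?rhs"
      using kbar_mersenne[of _ n l] unfolding T_def by (intro sum.cong prod.cong) auto
    finally show ?thesis .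
  qed
qed

end
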